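(* Let $n,m,T$ be positive integers, $\epsilon\ge 0$, and let $x(0),\dots,x(T)\in\mathbb{R}^n$ and $u(0),\dots,u(T-1)\in\mathbb{R}^m$ be given data, with $X_1:=[x(1)\ \cdots\ x(T)]$, $X_0:=[x(0)\ \cdots\ x(T-1)]$, $U_0:=[u(0)\ \cdots\ u(T-1)]$. Consider the two feasibility problems: (E) find symmetric $P\in\mathbb{R}^{n\times n}$, $Y\in\mathbb{R}^{m\times n}$, and scalars $\beta,\alpha$ with $\alpha\ge 0$, $\beta>0$, $P\succ 0$ and $$M(P,Y,\beta)-\alpha\begin{bmatrix} I & X_1\\ 0 & -X_0\\ 0 & -U_0\\ 0 & 0\end{bmatrix}\begin{bmatrix} T\epsilon I & 0\\ 0 & -I\end{bmatrix}\begin{bmatrix} I & X_1\\ 0 & -X_0\\ 0 & -U_0\\ 0 & 0\end{bmatrix}^\top\succeq 0;$$ (I) find symmetric $P\in\mathbb{R}^{n\times n}$, $Y\in\mathbb{R}^{m\times n}$, and scalars $\beta,\tau_0,\dots,\tau_{T-1}$ with $\beta>0$, $\tau_i\ge0$ for all $i$, $P\succ 0$ and $$M(P,Y,\beta)-\sum_{i=0}^{T-1}\tau_i\begin{bmatrix} I & x(i+1)\\ 0 & -x(i)\\ 0 & -u(i)\\ 0 & 0\end{bmatrix}\begin{bmatrix}\epsilon I & 0\\ 0 & -1\end{bmatrix}\begin{bmatrix} I & x(i+1)\\ 0 & -x(i)\\ 0 & -u(i)\\ 0 & 0\end{bmatrix}^\top\succeq 0,$$ where $M(P,Y,\beta):=\begin{bmatrix}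 P-\beta I & 0 & 0 & 0\\ 0 & -P & -Y^\top & 0\\ 0 & -Y & 0 & Y\\ 0 & 0 & Y^\top & P\end{bmatrix}$. If problem (E) is feasible, then problem (I) is feasible.
   Context: $\succ$ ($\succeq$) denote positive definiteness (semidefiniteness). In $M(P,Y,\beta)$ the block rows/columns have sizes $n,n,m,n$; in the $4\times 2$ block matrices the row-block sizes are $n,n,m,n$ and the column-block sizes are $n$ and $T$ (in (E)) or $n$ and $1$ (in (I)); zero and identity blocks have compatible dimensions. *)

theory Defs
  imports "Jordan_Normal_Form.Matrix"
begin

definition psd_mat :: "real mat \<Rightarrow> bool" where
  "psd_mat A \<longleftrightarrow> dim_row A = dim_col A \<and> A\<^sup>T = A \<and>
     (\<forall>v. dim_vec v = dim_row A \<longrightarrow> v \<bullet> (A *\<^sub>v v) \<ge> 0)"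

definition pd_mat :: "real mat \<Rightarrow> bool" where
  "pd_mat A \<longleftrightarrow> dim_row A = dim_col A \<and> A\<^sup>T = A \<and>
     (\<forall>v. dim_vec v = dim_row A \<longrightarrow> v \<noteq> 0\<^sub>v (dim_row A) \<longrightarrow> v \<bullet> (A *\<^sub>v v) > 0)"

definition cols_mat :: "nat \<Rightarrow> nat \<Rightarrow> (nat \<Rightarrow> real vec) \<Rightarrow> real mat" where
  "cols_mat d k f = mat d k (\<lambda>(i,j). f j $ i)"

(* M(P,Y,beta), block sizes n,n,m,n *)
definition M_mat :: "nat \<Rightarrow> nat \<Rightarrow> real mat \<Rightarrow> real mat \<Rightarrow> real \<Rightarrow> real mat" where
  "M_mat n m P Y \<beta> =
     four_block_mat
       (four_block_mat (P - \<beta> \<cdot>\<^sub>m 1\<^sub>m n) (0\<^sub>m n n) (0\<^sub>m n n) (- P))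
       (four_block_mat (0\<^sub>m n m) (0\<^sub>m n n) (- (Y\<^sup>T)) (0\<^sub>m n n))
       (four_block_mat (0\<^sub>m m n) (- Y) (0\<^sub>m n n) (0\<^sub>m n n))
       (four_block_mat (0\<^sub>m m m) Y (Y\<^sup>T) P)"

definition Z_mat :: "nat \<Rightarrow> nat \<Rightarrow> nat \<Rightarrow> real mat \<Rightarrow> real mat \<Rightarrow> real mat \<Rightarrow> real mat" where
  "Z_mat n m k A B C =
     four_block_mat (1\<^sub>m n) A (0\<^sub>m (n + m + n) n) ((- B) @\<^sub>r (- C) @\<^sub>r 0\<^sub>m n k)"

definition W_mat :: "nat \<Rightarrow> nat \<Rightarrow> real \<Rightarrow> real mat" where
  "W_mat n k c = four_block_mat (c \<cdot>\<^sub>m 1\<^sub>m n) (0\<^sub>m n k) (0\<^sub>m k n) (- (1\<^sub>m k))"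

definition msum :: "nat \<Rightarrow> nat \<Rightarrow> (nat \<Rightarrow> real mat) \<Rightarrow> real mat" where
  "msum d T F = foldr (\<lambda>i acc. F i + acc) [0..<T] (0\<^sub>m d d)"

end

theory Submission
  imports Defs
begin

text \<open>Take \<open>\<tau>\<^sub>i = \<alpha>\<close> for every sample. Since \<open>W\<close> is diagonal,
  \<open>Z W(c) Z\<^sup>T\<close> equals \<open>c\<close> times the Gram matrix of the first \<open>n\<close> columns of \<open>Z\<close>
  minus the Gram matrix of the remaining ones. For the stacked data matrix the first
  \<open>n\<close> columns are those of the identity, and the remaining \<open>T\<close> columns are exactly the
  last columns of the per-sample matrices \<open>Z\<^sub>i\<close>; hence
  \<open>\<Sum>\<^sub>i Z\<^sub>i W(\<epsilon>) Z\<^sub>i\<^sup>T = Z W(T\<epsilon>) Z\<^sup>T\<close>, and the constraint of (E) is literally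
  the constraint of (I).\<close>

lemma sum_lessThan_add_split:
  fixes f :: "nat \<Rightarrow> 'a::comm_monoid_add"
  shows "(\<Sum>e<n + k. f e) = (\<Sum>e<n. f e) + (\<Sum>j<k. f (n + j))"
  by (induction k) (simp_all add: add.assoc)

lemma W_mat_carrier: "W_mat n k c \<in> carrier_mat (n + k) (n + k)"
  unfolding W_mat_def by auto

lemma index_W_mat:
  "i < n + k \<Longrightarrow> j < n + k \<Longrightarrow>
    W_mat n k c $$ (i, j) = (if i = j then if i < n then c else -1 else 0)"
  unfolding W_mat_def by auto

lemma index_mult_W_mat:
  assumes "Z \<in> carrier_mat N (n + k)" and "a < N" and "e < n + k"
  shows "(Z * W_mat n k c) $$ (a, e) = Z $$ (a, e) * (if e < n then c else -1)"
proof -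
  have "(Z * W_mat n k c) $$ (a, e) = (\<Sum>j<n + k. Z $$ (a, j) * W_mat n k c $$ (j, e))"
    using assms W_mat_carrier[of n k c]
    by (simp add: scalar_prod_def lessThan_atLeast0)
  also have "\<dots> = (\<Sum>j<n + k. if j = e then Z $$ (a, e) * (if e < n then c else -1) else 0)"
    by (rule sum.cong) (use assms in \<open>auto simp: index_W_mat\<close>)
  finally show ?thesis
    using assms by simp
qed

lemma index_W_mat_congruence:
  assumes "Z \<in> carrier_mat N (n + k)" and "a < N" and "b < N"
  shows "(Z * W_mat n k c * Z\<^sup>T) $$ (a, b) =
    c * (\<Sum>e<n. Z $$ (a, e) * Z $$ (b, e)) - (\<Sum>j<k. Z $$ (a, n + j) * Z $$ (b, n + j))"
proof -
  have "(Z * W_mat n k c * Z\<^sup>T) $$ (a, b) = (\<Sum>e<n + k. (Z * W_mat n k c) $$ (a, e) * Z $$ (b, e))"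
    using assms W_mat_carrier[of n k c]
    by (simp add: scalar_prod_def lessThan_atLeast0 del: assoc_mult_mat row_mult)
  also have "\<dots> = (\<Sum>e<n + k. Z $$ (a, e) * (if e < n then c else -1) * Z $$ (b, e))"
    using assms by (simp add: index_mult_W_mat)
  finally show ?thesis
    by (simp add: sum_lessThan_add_split sum_distrib_left sum_negf mult.assoc mult.left_commute)
qed

lemma Z_mat_carrier:
  "A \<in> carrier_mat n k \<Longrightarrow> B \<in> carrier_mat n k \<Longrightarrow> C \<in> carrier_mat m k \<Longrightarrow>
    Z_mat n m k A B C \<in> carrier_mat (n + n + m + n) (n + k)"
  unfolding Z_mat_def by (auto simp: append_rows_def)

lemma index_Z_mat_left:
  "A \<in> carrier_mat n k \<Longrightarrow> B \<in> carrier_mat n k \<Longrightarrow> C \<in> carrier_mat m k \<Longrightarrow>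
    a < n + n + m + n \<Longrightarrow> e < n \<Longrightarrow> Z_mat n m k A B C $$ (a, e) = (if a = e then 1 else 0)"
  unfolding Z_mat_def by (auto simp: append_rows_def)

lemma index_Z_mat_right:
  "A \<in> carrier_mat n k \<Longrightarrow> B \<in> carrier_mat n k \<Longrightarrow> C \<in> carrier_mat m k \<Longrightarrow>
    a < n + n + m + n \<Longrightarrow> j < k \<Longrightarrow>
    Z_mat n m k A B C $$ (a, n + j) =
      (if a < n then A $$ (a, j) else if a < n + n then - B $$ (a - n, j)
       else if a < n + n + m then - C $$ (a - n - n, j) else 0)"
  unfolding Z_mat_def by (auto simp: append_rows_def)

lemma index_Z_mat_congruence:
  assumes "A \<in> carrier_mat n k" "B \<in> carrier_mat n k" "C \<in> carrier_mat m k"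
    and "a < n + n + m + n" "b < n + n + m + n"
  shows "(Z_mat n m k A B C * W_mat n k c * (Z_mat n m k A B C)\<^sup>T) $$ (a, b) =
    (if a = b \<and> a < n then c else 0) -
    (\<Sum>j<k. Z_mat n m k A B C $$ (a, n + j) * Z_mat n m k A B C $$ (b, n + j))"
proof -
  have "(\<Sum>e<n. Z_mat n m k A B C $$ (a, e) * Z_mat n m k A B C $$ (b, e)) =
      (\<Sum>e<n. if e = a then if a = b then 1 else 0 else 0)"
    by (rule sum.cong) (use assms in \<open>auto simp: index_Z_mat_left\<close>)
  then show ?thesis
    using index_W_mat_congruence[OF Z_mat_carrier[OF assms(1-3)] assms(4,5)] assms(4)
    by simp
qed

definition Z_data :: "nat \<Rightarrow> nat \<Rightarrow> nat \<Rightarrow> (nat \<Rightarrow> real vec) \<Rightarrow> (nat \<Rightarrow> real vec) \<Rightarrow> real mat" where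
  "Z_data n m T x u = Z_mat n m T (cols_mat n T (\<lambda>j. x (j + 1))) (cols_mat n T x) (cols_mat m T u)"

definition Z_sample :: "nat \<Rightarrow> nat \<Rightarrow> (nat \<Rightarrow> real vec) \<Rightarrow> (nat \<Rightarrow> real vec) \<Rightarrow> nat \<Rightarrow> real mat" where
  "Z_sample n m x u i =
    Z_mat n m 1 (mat_of_cols n [x (i + 1)]) (mat_of_cols n [x i]) (mat_of_cols m [u i])"

lemma Z_data_carrier: "Z_data n m T x u \<in> carrier_mat (n + n + m + n) (n + T)"
  unfolding Z_data_def cols_mat_def by (rule Z_mat_carrier) auto

lemma Z_sample_carrier: "Z_sample n m x u i \<in> carrier_mat (n + n + m + n) (n + 1)"
  unfolding Z_sample_def by (rule Z_mat_carrier) auto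

lemma Z_sample_congruence_carrier:
  "Z_sample n m x u i * W_mat n 1 c * (Z_sample n m x u i)\<^sup>T \<in> carrier_mat (n + n + m + n) (n + n + m + n)"
  using Z_sample_carrier W_mat_carrier by (metis mult_carrier_mat transpose_carrier_mat)

lemma index_Z_data_right:
  assumes "a < n + n + m + n" and "i < T"
  shows "Z_data n m T x u $$ (a, n + i) = Z_sample n m x u i $$ (a, n)"
proof -
  have "Z_data n m T x u $$ (a, n + i) =
      (if a < n then x (i + 1) $ a else if a < n + n then - x i $ (a - n)
       else if a < n + n + m then - u i $ (a - n - n) else 0)"
    using assms unfolding Z_data_def cols_mat_def by (simp add: index_Z_mat_right)
  also have "\<dots> = Z_sample n m x u i $$ (a, n + 0)"
    using assms unfolding Z_sample_def
    by (subst index_Z_mat_right) (auto simp: mat_of_cols_index)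
  finally show ?thesis
    by simp
qed

lemma index_msum:
  assumes "\<And>i. i < T \<Longrightarrow> F i \<in> carrier_mat d d"
  shows "msum d T F \<in> carrier_mat d d"
    and "a < d \<Longrightarrow> b < d \<Longrightarrow> msum d T F $$ (a, b) = (\<Sum>i<T. F i $$ (a, b))"
proof -
  have foldr: "foldr (\<lambda>i acc. F i + acc) is (0\<^sub>m d d) \<in> carrier_mat d d \<and>
      (\<forall>a<d. \<forall>b<d. foldr (\<lambda>i acc. F i + acc) is (0\<^sub>m d d) $$ (a, b) =
         sum_list (map (\<lambda>i. F i $$ (a, b)) is))"
    if "\<forall>i\<in>set is. F i \<in> carrier_mat d d" for "is"
    using that by (induction "is") auto
  have "\<forall>i\<in>set [0..<T]. F i \<in> carrier_mat d d"
    using assms by auto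
  note foldr[OF this]
  then show "msum d T F \<in> carrier_mat d d"
    and "a < d \<Longrightarrow> b < d \<Longrightarrow> msum d T F $$ (a, b) = (\<Sum>i<T. F i $$ (a, b))"
    unfolding msum_def by (auto simp: sum_set_upt_conv_sum_list_nat[symmetric] lessThan_atLeast0)
qed

lemma msum_smult:
  assumes F_carrier: "\<And>i. i < T \<Longrightarrow> F i \<in> carrier_mat d d"
  shows "msum d T (\<lambda>i. c \<cdot>\<^sub>m F i) = c \<cdot>\<^sub>m msum d T F"
proof -
  note F_msum = index_msum[of T F, OF F_carrier]
  have "\<And>i. i < T \<Longrightarrow> c \<cdot>\<^sub>m F i \<in> carrier_mat d d"
    using F_carrier by simp
  note cF_msum = index_msum[of T "\<lambda>i. c \<cdot>\<^sub>m F i", OF this]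
  show ?thesis
  proof (rule eq_matI)
    fix a b
    assume "a < dim_row (c \<cdot>\<^sub>m msum d T F)" "b < dim_col (c \<cdot>\<^sub>m msum d T F)"
    then have ab: "a < d" "b < d"
      using F_msum(1) by auto
    have "(c \<cdot>\<^sub>m F i) $$ (a, b) = c * F i $$ (a, b)" if "i < T" for i
      using F_carrier[OF that] ab by simp
    then show "msum d T (\<lambda>i. c \<cdot>\<^sub>m F i) $$ (a, b) = (c \<cdot>\<^sub>m msum d T F) $$ (a, b)"
      using F_msum(1) ab by (simp add: F_msum(2) cF_msum(2) sum_distrib_left)
  qed (use F_msum(1) cF_msum(1) in auto)
qed

lemma index_Z_sample_congruence:
  assumes "a < n + n + m + n" and "b < n + n + m + n"
  shows "(Z_sample n m x u i * W_mat n 1 c * (Z_sample n m x u i)\<^sup>T) $$ (a, b) =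
    (if a = b \<and> a < n then c else 0) - Z_sample n m x u i $$ (a, n) * Z_sample n m x u i $$ (b, n)"
proof -
  have "mat_of_cols n [x (i + 1)] \<in> carrier_mat n 1" "mat_of_cols n [x i] \<in> carrier_mat n 1"
    "mat_of_cols m [u i] \<in> carrier_mat m 1"
    by auto
  from index_Z_mat_congruence[OF this assms, of c] show ?thesis
    unfolding Z_sample_def by simp
qed

lemma index_Z_data_congruence:
  assumes "a < n + n + m + n" and "b < n + n + m + n"
  shows "(Z_data n m T x u * W_mat n T c * (Z_data n m T x u)\<^sup>T) $$ (a, b) =
    (if a = b \<and> a < n then c else 0) -
    (\<Sum>j<T. Z_data n m T x u $$ (a, n + j) * Z_data n m T x u $$ (b, n + j))"
proof -
  have "cols_mat n T (\<lambda>j. x (j + 1)) \<in> carrier_mat n T" "cols_mat n T x \<in> carrier_mat n T"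
    "cols_mat m T u \<in> carrier_mat m T"
    unfolding cols_mat_def by auto
  from index_Z_mat_congruence[OF this assms, of c] show ?thesis
    unfolding Z_data_def .
qed

lemma msum_Z_sample_congruence:
  "msum (n + n + m + n) T (\<lambda>i. Z_sample n m x u i * W_mat n 1 \<epsilon> * (Z_sample n m x u i)\<^sup>T) =
    Z_data n m T x u * W_mat n T (real T * \<epsilon>) * (Z_data n m T x u)\<^sup>T"
  (is "msum ?d T ?F = ?G")
proof -
  note F_carrier = Z_sample_congruence_carrier[of n m x u _ \<epsilon>]
  have "msum ?d T ?F $$ (a, b) = ?G $$ (a, b)" if "a < ?d" "b < ?d" for a b
  proof -
    have "msum ?d T ?F $$ (a, b) = (\<Sum>i<T. ?F i $$ (a, b))"
      using that by (rule index_msum(2)[OF F_carrier])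
    also have "\<dots> = (\<Sum>i<T. (if a = b \<and> a < n then \<epsilon> else 0) -
        Z_data n m T x u $$ (a, n + i) * Z_data n m T x u $$ (b, n + i))"
      using that by (intro sum.cong refl)
        (simp only: index_Z_sample_congruence index_Z_data_right lessThan_iff)
    also have "\<dots> = ?G $$ (a, b)"
      using that by (simp add: index_Z_data_congruence sum_subtractf)
    finally show ?thesis .
  qed
  then show ?thesis
    using index_msum(1)[of T ?F, OF F_carrier] Z_data_carrier[of n m T x u]
    by (intro eq_matI) auto
qed

theorem proposition2:
  fixes n m T :: nat and \<epsilon> :: real
    and x u :: "nat \<Rightarrow> real vec"
  assumes "0 < n" and "0 < m" and "0 < T" and "\<epsilon> \<ge> 0"
    and "\<And>i. i \<le> T \<Longrightarrow> dim_vec (x i) = n"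
    and "\<And>i. i < T \<Longrightarrow> dim_vec (u i) = m"
    and E: "\<exists>P Y \<beta> \<alpha>. P \<in> carrier_mat n n \<and> P\<^sup>T = P \<and> Y \<in> carrier_mat m n \<and>
              \<alpha> \<ge> 0 \<and> \<beta> > 0 \<and> pd_mat P \<and>
              (let X1 = cols_mat n T (\<lambda>j. x (j + 1));
                   X0 = cols_mat n T x;
                   U0 = cols_mat m T u;
                   Z = Z_mat n m T X1 X0 U0
               in psd_mat (M_mat n m P Y \<beta> -
                    \<alpha> \<cdot>\<^sub>m (Z * W_mat n T (real T * \<epsilon>) * Z\<^sup>T)))"
  shows "\<exists>P Y \<beta> (\<tau> :: nat \<Rightarrow> real). P \<in> carrier_mat n n \<and> P\<^sup>T = P \<and> Y \<in> carrier_mat m n \<and>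
              \<beta> > 0 \<and> (\<forall>i < T. \<tau> i \<ge> 0) \<and> pd_mat P \<and>
              psd_mat (M_mat n m P Y \<beta> -
                 msum (n + n + m + n) T (\<lambda>i.
                   (let Zi = Z_mat n m 1 (mat_of_cols n [x (i + 1)])
                                     (mat_of_cols n [x i]) (mat_of_cols m [u i])
                    in \<tau> i \<cdot>\<^sub>m (Zi * W_mat n 1 \<epsilon> * Zi\<^sup>T))))"
proof -
  obtain P Y \<beta> \<alpha> where "P \<in> carrier_mat n n" "P\<^sup>T = P" "Y \<in> carrier_mat m n"
    "\<alpha> \<ge> 0" "\<beta> > 0" "pd_mat P"
    and E_constraint: "psd_mat (M_mat n m P Y \<beta> -
      \<alpha> \<cdot>\<^sub>m (Z_data n m T x u * W_mat n T (real T * \<epsilon>) * (Z_data n m T x u)\<^sup>T))"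
    using E unfolding Let_def Z_data_def by blast
  have "msum (n + n + m + n) T (\<lambda>i. \<alpha> \<cdot>\<^sub>m (Z_sample n m x u i * W_mat n 1 \<epsilon> * (Z_sample n m x u i)\<^sup>T))
      = \<alpha> \<cdot>\<^sub>m (Z_data n m T x u * W_mat n T (real T * \<epsilon>) * (Z_data n m T x u)\<^sup>T)"
    by (simp only: msum_smult[OF Z_sample_congruence_carrier] msum_Z_sample_congruence)
  with E_constraint have "psd_mat (M_mat n m P Y \<beta> - msum (n + n + m + n) T
      (\<lambda>i. \<alpha> \<cdot>\<^sub>m (Z_sample n m x u i * W_mat n 1 \<epsilon> * (Z_sample n m x u i)\<^sup>T)))"
    by simp
  then show ?thesis
    using \<open>P \<in> carrier_mat n n\<close> \<open>P\<^sup>T = P\<close> \<open>Y \<in> carrier_mat m n\<close> \<open>\<alpha> \<ge> 0\<close> \<open>\<beta> > 0\<close> \<open>pd_mat P\<close>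
    unfolding Z_sample_def Let_def
    by (intro exI[of _ P] exI[of _ Y] exI[of _ \<beta>] exI[of _ "\<lambda>_. \<alpha>"]) auto
qed

end
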